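(* Assume $\mathcal M$ satisfies extensibility. Let $\lambda\in\mathbb R^A$, $\lambda>0$, whose partition of $A$ by equality of $\lambda_i$ is $S_1,\dots,S_{k-1},A'$ with $\lambda(S_1)<\dots<\lambda(S_{k-1})<\lambda(A')$. Let $S_k\subset A'$ and let $\lambda'\ge\lambda$ (componentwise, $\lambda'>0$) be such that its partition by equality of $\lambda'_i$ is $S_1,\dots,S_k,A'\setminus S_k$ with $\lambda'(S_1)<\dots<\lambda'(S_k)<\lambda'(A'\setminus S_k)$. Then for every $g<k$: $\mathrm{delay}_{S_g}(X)=\mathrm{delay}_{S_g}(X')$ for any optimal solution $X$ of $LP(\lambda)$ and any optimal solution $X'$ of $LP(\lambda')$; and for every $T\subseteq S_g$, $\max\{\mathrm{delay}_T(X): X\text{ optimal for }LP(\lambda)\}=\max\{\mathrm{delay}_T(X): X\text{ optimal for }LP(\lambda')\}$.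
   Context: A market $\mathcal M$: finite agent set $A$, finite goods set $G$ (supply $1$ each), finite index set $C$; agent $i$ has real coefficients $a_{ijk}$, requirements $r_{ik}\ge0$, delays $d_{ij}\ge0$. CC$(i)$: $\sum_ja_{ijk}x_{ij}\ge r_{ik}$ for all $k$, $x_{ij}\ge0$. An allocation $X\ge0$ is supply respecting if $\sum_ix_{ij}\le1$ for all $j$. For $S\subseteq A$, $X$ is jointly optimal for $S$ if it satisfies CC$(i)$ for all $i\in S$, is supply respecting, and minimizes $\sum_{i\in S}\sum_jd_{ij}x_{ij}$ among such allocations. Extensibility: for every $S\subset A$, every $X$ jointly optimal for $S$ and every $i\in A\setminus S$, there is $X'$ jointly optimal for $S\cup\{i\}$ with $\sum_jd_{i'j}x'_{i'j}=\sum_jd_{i'j}x_{i'j}$ for all $i'\in S$. $LP(\lambda)$: minimize $\sum_i\lambda_i\sum_jd_{ij}x_{ij}$ s.t. $\sum_ja_{ijk}x_{ij}\ge r_{ik}$ for all $(i,k)$, $\sum_ix_{ij}\le1$ for all $j$, $x\ge0$ (assumed feasible). $\mathrm{delay}_S(X)=\sum_{i\in S}\sum_jd_{ij}x_{ij}$; $\lambda(S)$ is the common value of $\lambda_i$ on $S$. *)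

theory Defs
  imports Main "HOL-Library.Extended_Real" Complex_Main
begin

text \<open>An allocation is a function
  X :: agent \<Rightarrow> good \<Rightarrow> real; only its values on A \<times> G matter.\<close>

definition supply_respecting :: "'a set \<Rightarrow> 'g set \<Rightarrow> ('a \<Rightarrow> 'g \<Rightarrow> real) \<Rightarrow> bool" where
  "supply_respecting A G X \<longleftrightarrow>
     (\<forall>i\<in>A. \<forall>j\<in>G. X i j \<ge> 0) \<and> (\<forall>j\<in>G. (\<Sum>i\<in>A. X i j) \<le> 1)"

definition CC :: "'g set \<Rightarrow> 'c set \<Rightarrow> ('a \<Rightarrow> 'g \<Rightarrow> 'c \<Rightarrow> real) \<Rightarrow> ('a \<Rightarrow> 'c \<Rightarrow> real)
                  \<Rightarrow> 'a \<Rightarrow> ('a \<Rightarrow> 'g \<Rightarrow> real) \<Rightarrow> bool" where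
  "CC G C a r i X \<longleftrightarrow> (\<forall>j\<in>G. X i j \<ge> 0) \<and> (\<forall>k\<in>C. (\<Sum>j\<in>G. a i j k * X i j) \<ge> r i k)"

definition delay :: "'g set \<Rightarrow> ('a \<Rightarrow> 'g \<Rightarrow> real) \<Rightarrow> 'a set \<Rightarrow> ('a \<Rightarrow> 'g \<Rightarrow> real) \<Rightarrow> real" where
  "delay G d S X = (\<Sum>i\<in>S. \<Sum>j\<in>G. d i j * X i j)"

definition jointly_optimal ::
  "'a set \<Rightarrow> 'g set \<Rightarrow> 'c set \<Rightarrow> ('a \<Rightarrow> 'g \<Rightarrow> 'c \<Rightarrow> real) \<Rightarrow> ('a \<Rightarrow> 'c \<Rightarrow> real)
   \<Rightarrow> ('a \<Rightarrow> 'g \<Rightarrow> real) \<Rightarrow> 'a set \<Rightarrow> ('a \<Rightarrow> 'g \<Rightarrow> real) \<Rightarrow> bool" where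
  "jointly_optimal A G C a r d S X \<longleftrightarrow>
     supply_respecting A G X \<and> (\<forall>i\<in>S. CC G C a r i X) \<and>
     (\<forall>Y. supply_respecting A G Y \<and> (\<forall>i\<in>S. CC G C a r i Y) \<longrightarrow> delay G d S X \<le> delay G d S Y)"

definition extensible ::
  "'a set \<Rightarrow> 'g set \<Rightarrow> 'c set \<Rightarrow> ('a \<Rightarrow> 'g \<Rightarrow> 'c \<Rightarrow> real) \<Rightarrow> ('a \<Rightarrow> 'c \<Rightarrow> real)
   \<Rightarrow> ('a \<Rightarrow> 'g \<Rightarrow> real) \<Rightarrow> bool" where
  "extensible A G C a r d \<longleftrightarrow>
     (\<forall>S X i. S \<subset> A \<longrightarrow> jointly_optimal A G C a r d S X \<longrightarrow> i \<in> A - S \<longrightarrow>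
        (\<exists>X'. jointly_optimal A G C a r d (insert i S) X' \<and>
              (\<forall>i'\<in>S. delay G d {i'} X' = delay G d {i'} X)))"

definition lp_feasible ::
  "'a set \<Rightarrow> 'g set \<Rightarrow> 'c set \<Rightarrow> ('a \<Rightarrow> 'g \<Rightarrow> 'c \<Rightarrow> real) \<Rightarrow> ('a \<Rightarrow> 'c \<Rightarrow> real)
   \<Rightarrow> ('a \<Rightarrow> 'g \<Rightarrow> real) \<Rightarrow> bool" where
  "lp_feasible A G C a r X \<longleftrightarrow> supply_respecting A G X \<and> (\<forall>i\<in>A. CC G C a r i X)"

definition lp_objective ::
  "'a set \<Rightarrow> 'g set \<Rightarrow> ('a \<Rightarrow> 'g \<Rightarrow> real) \<Rightarrow> ('a \<Rightarrow> real) \<Rightarrow> ('a \<Rightarrow> 'g \<Rightarrow> real) \<Rightarrow> real" where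
  "lp_objective A G d lam X = (\<Sum>i\<in>A. lam i * (\<Sum>j\<in>G. d i j * X i j))"

definition lp_optimal ::
  "'a set \<Rightarrow> 'g set \<Rightarrow> 'c set \<Rightarrow> ('a \<Rightarrow> 'g \<Rightarrow> 'c \<Rightarrow> real) \<Rightarrow> ('a \<Rightarrow> 'c \<Rightarrow> real)
   \<Rightarrow> ('a \<Rightarrow> 'g \<Rightarrow> real) \<Rightarrow> ('a \<Rightarrow> real) \<Rightarrow> ('a \<Rightarrow> 'g \<Rightarrow> real) \<Rightarrow> bool" where
  "lp_optimal A G C a r d lam X \<longleftrightarrow>
     lp_feasible A G C a r X \<and>
     (\<forall>Y. lp_feasible A G C a r Y \<longrightarrow> lp_objective A G d lam X \<le> lp_objective A G d lam Y)"

definition ordered_level_partition :: "('a \<Rightarrow> real) \<Rightarrow> 'a set \<Rightarrow> 'a set list \<Rightarrow> bool" where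
  "ordered_level_partition lam A Ps \<longleftrightarrow>
     (\<forall>n<length Ps. Ps ! n \<noteq> {}) \<and>
     (\<Union>(set Ps)) = A \<and>
     (\<forall>n<length Ps. \<forall>x\<in>Ps ! n. \<forall>y\<in>Ps ! n. lam x = lam y) \<and>
     (\<forall>n m. n < m \<and> m < length Ps \<longrightarrow> (\<forall>x\<in>Ps ! n. \<forall>y\<in>Ps ! m. lam x < lam y))"

end

theory Submission
  imports Defs
begin

text \<open>By Abel summation, the objective of LP(w) with positive weights is a positive
  combination of the delays of the upper sets of w. Extensibility, applied one agent at a
  time, yields one allocation minimising the delay of every member of a chain of agent sets
  simultaneously; so the optima of LP(w) are exactly the feasible allocations minimising
  every upper-set delay. For a level S_g with g < k, the upper sets of lam are upper sets of
  lam', and the two upper sets U \<supseteq> V of lam at S_g = U - V are also upper sets of lam'.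
  Hence both LPs fix the delays of U and of V, so that of S_g. For T \<subseteq> S_g, an
  allocation that is optimal for both LPs and also minimises the delay of U - T has the
  largest delay on T among the optima of either LP.\<close>

definition level_below :: "real set \<Rightarrow> real \<Rightarrow> real" where
  "level_below L v = Max (insert 0 {u\<in>L. u < v})"

lemma level_below_less:
  assumes "finite L" "v > 0"
  shows "level_below L v < v"
proof -
  have "Max (insert 0 {u\<in>L. u < v}) \<in> insert 0 {u\<in>L. u < v}"
    by (rule Max_in) (use assms in auto)
  then show ?thesis unfolding level_below_def using assms by auto
qed

lemma sum_level_gaps:
  assumes "finite L" "\<forall>u\<in>L. u > 0" "v \<in> L"
  shows "(\<Sum>u\<in>{u\<in>L. u \<le> v}. u - level_below L u) = v"
  using assms(3)
proof (induction "card {u\<in>L. u < v}" arbitrary: v rule: less_induct)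
  case less
  show ?case
  proof (cases "{u\<in>L. u < v} = {}")
    case True
    then have "{u\<in>L. u \<le> v} = {v}" using less.prems by force
    moreover have "level_below L v = 0" unfolding level_below_def True by simp
    ultimately show ?thesis by simp
  next
    case False
    define p where "p = Max {u\<in>L. u < v}"
    have fin: "finite {u\<in>L. u < v}" using assms(1) by simp
    have p: "p \<in> {u\<in>L. u < v}" unfolding p_def using Max_in[OF fin False] .
    have p_max: "\<forall>u\<in>{u\<in>L. u < v}. u \<le> p" unfolding p_def using Max_ge[OF fin] by blast
    have "p > 0" using p assms(2) by auto
    then have below_v: "level_below L v = p"
      unfolding level_below_def p_def using Max_insert[OF fin False] p_def by (simp add: max_def)
    have split: "{u\<in>L. u \<le> v} = insert v {u\<in>L. u \<le> p}" "v \<notin> {u\<in>L. u \<le> p}"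
      using p_max p less.prems by force+
    have "card {u\<in>L. u < p} < card {u\<in>L. u < v}"
      by (rule psubset_card_mono[OF fin]) (use p in auto)
    then have "(\<Sum>u\<in>{u\<in>L. u \<le> p}. u - level_below L u) = p" using less.hyps p by blast
    then show ?thesis unfolding split(1) using split(2) assms(1) below_v by simp
  qed
qed

lemma lp_objective_eq_sum_upper_set_delays:
  assumes "finite A" "\<forall>i\<in>A. w i > 0"
  shows "lp_objective A G d w X =
    (\<Sum>v\<in>w`A. (v - level_below (w`A) v) * delay G d {i\<in>A. v \<le> w i} X)"
proof -
  let ?D = "\<lambda>i. \<Sum>j\<in>G. d i j * X i j"
  let ?L = "w`A"
  have "(\<Sum>v\<in>?L. (v - level_below ?L v) * delay G d {i\<in>A. v \<le> w i} X)
      = (\<Sum>v\<in>?L. \<Sum>i\<in>{i\<in>A. v \<le> w i}. (v - level_below ?L v) * ?D i)"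
    unfolding delay_def by (simp add: sum_distrib_left)
  also have "\<dots> = (\<Sum>i\<in>A. \<Sum>v\<in>{v\<in>?L. v \<le> w i}. (v - level_below ?L v) * ?D i)"
    using sum.swap_restrict[of ?L A "\<lambda>v i. (v - level_below ?L v) * ?D i" "\<lambda>v i. v \<le> w i"]
      assms(1) by simp
  also have "\<dots> = (\<Sum>i\<in>A. (\<Sum>v\<in>{v\<in>?L. v \<le> w i}. v - level_below ?L v) * ?D i)"
    by (simp add: sum_distrib_right)
  also have "\<dots> = (\<Sum>i\<in>A. w i * ?D i)"
    using sum_level_gaps[of ?L] assms by (intro sum.cong) auto
  finally show ?thesis unfolding lp_objective_def by simp
qed

definition delay_minimal ::
  "'a set \<Rightarrow> 'g set \<Rightarrow> 'c set \<Rightarrow> ('a \<Rightarrow> 'g \<Rightarrow> 'c \<Rightarrow> real) \<Rightarrow> ('a \<Rightarrow> 'c \<Rightarrow> real)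
   \<Rightarrow> ('a \<Rightarrow> 'g \<Rightarrow> real) \<Rightarrow> 'a set \<Rightarrow> ('a \<Rightarrow> 'g \<Rightarrow> real) \<Rightarrow> bool" where
  "delay_minimal A G C a r d P X \<longleftrightarrow>
     (\<forall>Y. supply_respecting A G Y \<and> (\<forall>i\<in>P. CC G C a r i Y) \<longrightarrow> delay G d P X \<le> delay G d P Y)"

definition upward_closed :: "'a set \<Rightarrow> ('a \<Rightarrow> real) \<Rightarrow> 'a set \<Rightarrow> bool" where
  "upward_closed A w P \<longleftrightarrow> P \<subseteq> A \<and> (\<forall>i\<in>P. \<forall>j\<in>A. w i \<le> w j \<longrightarrow> j \<in> P)"

definition upper_optimal ::
  "'a set \<Rightarrow> 'g set \<Rightarrow> 'c set \<Rightarrow> ('a \<Rightarrow> 'g \<Rightarrow> 'c \<Rightarrow> real) \<Rightarrow> ('a \<Rightarrow> 'c \<Rightarrow> real)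
   \<Rightarrow> ('a \<Rightarrow> 'g \<Rightarrow> real) \<Rightarrow> ('a \<Rightarrow> real) \<Rightarrow> ('a \<Rightarrow> 'g \<Rightarrow> real) \<Rightarrow> bool" where
  "upper_optimal A G C a r d w X \<longleftrightarrow>
     lp_feasible A G C a r X \<and> (\<forall>P. upward_closed A w P \<longrightarrow> delay_minimal A G C a r d P X)"

lemma upward_closed_upper_set:
  "upward_closed A w {i\<in>A. v \<le> w i}" "upward_closed A w {i\<in>A. v < w i}"
  unfolding upward_closed_def by auto

lemma upward_closed_eq_upper_set:
  assumes "finite A" "upward_closed A w P" "P \<noteq> {}"
  shows "\<exists>v\<in>w`A. P = {i\<in>A. v \<le> w i}"
proof -
  have fin: "finite (w`P)" using assms(1,2) finite_subset unfolding upward_closed_def by blast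
  obtain p where p: "p \<in> P" "w p = Min (w`P)"
    using Min_in[OF fin] assms(3) by (metis empty_is_image imageE)
  then have "P = {i\<in>A. w p \<le> w i}" using assms(2) fin unfolding upward_closed_def by auto
  moreover have "w p \<in> w`A" using p(1) assms(2) unfolding upward_closed_def by blast
  ultimately show ?thesis by blast
qed

lemma upward_closed_chain:
  assumes "upward_closed A w P" "upward_closed A w Q"
  shows "P \<subseteq> Q \<or> Q \<subseteq> P"
  using assms unfolding upward_closed_def by (meson linear subset_eq)

lemma upward_closed_dichotomy:
  assumes "upward_closed A w P" "x \<in> A"
  shows "P \<subseteq> {i\<in>A. w x < w i} \<or> {i\<in>A. w x \<le> w i} \<subseteq> P"
  using assms unfolding upward_closed_def by (force simp: not_less)

lemma delay_minimal_empty: "delay_minimal A G C a r d {} X"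
  unfolding delay_minimal_def delay_def by simp

lemma upper_optimal_imp_lp_optimal:
  assumes "finite A" "\<forall>i\<in>A. w i > 0" "upper_optimal A G C a r d w Z"
  shows "lp_optimal A G C a r d w Z"
  unfolding lp_optimal_def
proof (intro conjI allI impI)
  show Z: "lp_feasible A G C a r Z" using assms(3) unfolding upper_optimal_def by blast
  fix Y assume Y: "lp_feasible A G C a r Y"
  have "(\<Sum>v\<in>w`A. (v - level_below (w`A) v) * delay G d {i\<in>A. v \<le> w i} Z)
     \<le> (\<Sum>v\<in>w`A. (v - level_below (w`A) v) * delay G d {i\<in>A. v \<le> w i} Y)"
  proof (rule sum_mono)
    fix v assume v: "v \<in> w`A"
    have "v - level_below (w`A) v > 0" using level_below_less[of "w`A" v] v assms(1,2) by auto
    moreover have "delay G d {i\<in>A. v \<le> w i} Z \<le> delay G d {i\<in>A. v \<le> w i} Y"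
      using assms(3) Y upward_closed_upper_set(1)[of A w v]
      unfolding upper_optimal_def delay_minimal_def lp_feasible_def by blast
    ultimately show "(v - level_below (w`A) v) * delay G d {i\<in>A. v \<le> w i} Z
      \<le> (v - level_below (w`A) v) * delay G d {i\<in>A. v \<le> w i} Y" by (simp add: mult_left_mono)
  qed
  then show "lp_objective A G d w Z \<le> lp_objective A G d w Y"
    by (simp only: lp_objective_eq_sum_upper_set_delays[OF assms(1,2)])
qed

text \<open>Since some optimum minimises every upper-set delay and the objective weighs these
  delays positively, an optimum that failed to minimise one of them would be beaten.\<close>
lemma lp_optimal_imp_upper_optimal:
  assumes "finite A" "\<forall>i\<in>A. w i > 0" "upper_optimal A G C a r d w Z"
    and X: "lp_optimal A G C a r d w X"
  shows "upper_optimal A G C a r d w X"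
proof -
  let ?c = "\<lambda>v. v - level_below (w`A) v"
  let ?f = "\<lambda>X v. ?c v * delay G d {i\<in>A. v \<le> w i} X"
  have X_feas: "lp_feasible A G C a r X" using X unfolding lp_optimal_def by simp
  have Z_min: "delay_minimal A G C a r d {i\<in>A. v \<le> w i} Z" for v
    using assms(3) upward_closed_upper_set(1) unfolding upper_optimal_def by blast
  have c_pos: "?c v > 0" if "v \<in> w`A" for v using level_below_less that assms(1,2) by fastforce
  have le: "?f Z v \<le> ?f X v" if "v \<in> w`A" for v
    using Z_min[of v] X_feas c_pos[OF that]
    unfolding delay_minimal_def lp_feasible_def by (simp add: mult_left_mono)
  have "sum (?f X) (w`A) \<le> sum (?f Z) (w`A)"
    using X assms(3) lp_objective_eq_sum_upper_set_delays[OF assms(1,2)]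
    unfolding lp_optimal_def upper_optimal_def by metis
  then have eq: "?f Z v = ?f X v" if "v \<in> w`A" for v
    using sum_strict_mono_ex1[of "w`A" "?f Z" "?f X"] le assms(1) that
    by (meson finite_imageI leD order.not_eq_order_implies_strict)
  have upper_min: "delay_minimal A G C a r d {i\<in>A. v \<le> w i} X" if "v \<in> w`A" for v
    using Z_min[of v] eq[OF that] c_pos[OF that] unfolding delay_minimal_def by simp
  have "delay_minimal A G C a r d P X" if "upward_closed A w P" for P
    using upward_closed_eq_upper_set[OF assms(1) that] upper_min delay_minimal_empty by metis
  then show ?thesis using X_feas unfolding upper_optimal_def by blast
qed

lemma delay_Diff:
  assumes "finite U" "T \<subseteq> U"
  shows "delay G d U X = delay G d T X + delay G d (U - T) X"
  unfolding delay_def using sum.subset_diff[OF assms(2,1)] by (simp add: add.commute)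

lemma delay_eq_if_agent_delays_eq:
  assumes "\<forall>i\<in>P. delay G d {i} X = delay G d {i} Y"
  shows "delay G d P X = delay G d P Y"
  using assms unfolding delay_def by (auto intro: sum.cong)

lemma delay_minimal_delay_eq:
  assumes "delay_minimal A G C a r d P X" "delay_minimal A G C a r d P Y"
    "lp_feasible A G C a r X" "lp_feasible A G C a r Y" "P \<subseteq> A"
  shows "delay G d P X = delay G d P Y"
proof -
  have "delay G d P X \<le> delay G d P Y" "delay G d P Y \<le> delay G d P X"
    using assms unfolding delay_minimal_def lp_feasible_def by blast+
  then show ?thesis by simp
qed

lemma Union_finite_chain_psubset:
  assumes "finite K" "chain\<^sub>\<subseteq> K" "\<forall>P\<in>K. P \<subset> B" "B \<noteq> {}"
  shows "\<Union>K \<subset> B"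
proof (cases "K = {}")
  case False
  then have "\<Union>K \<in> K"
    using Union_in_chain assms(1,2) chain_subset_alt_def by metis
  then show ?thesis using assms(3) by blast
qed (use assms(4) in auto)

text \<open>Agents are added one at a time by extensibility; each new agent is chosen outside
  every chain member that does not yet contain all agents so far, so those members keep
  their delays and hence their minimality.\<close>
lemma extensible_chain_optimum:
  assumes fin: "finite A" and ext: "extensible A G C a r d" and chain: "chain\<^sub>\<subseteq> F"
    and "B \<subseteq> A"
  shows "\<exists>X. jointly_optimal A G C a r d B X \<and> (\<forall>P\<in>F. delay_minimal A G C a r d (P \<inter> B) X)"
  using \<open>B \<subseteq> A\<close>
proof (induction "card B" arbitrary: B rule: less_induct)
  case less
  show ?case
  proof (cases "B = {}")
    case True
    have "jointly_optimal A G C a r d B (\<lambda>_ _. 0) \<and>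
      (\<forall>P\<in>F. delay_minimal A G C a r d (P \<inter> B) (\<lambda>_ _. 0))"
      unfolding True jointly_optimal_def supply_respecting_def delay_minimal_def delay_def
      by simp
    then show ?thesis by (rule exI[where x = "\<lambda>_ _. 0"])
  next
    case False
    have finB: "finite B" using less.prems fin finite_subset by blast
    define K where "K = {P \<inter> B | P. P \<in> F \<and> \<not> B \<subseteq> P}"
    have "\<Union>K \<subset> B"
    proof (rule Union_finite_chain_psubset)
      show "finite K" unfolding K_def by (rule finite_subset[of _ "Pow B"]) (use finB in auto)
      show "chain\<^sub>\<subseteq> K" using chain unfolding K_def chain_subset_def by blast
    qed (use False in \<open>auto simp: K_def\<close>)
    then obtain i where i: "i \<in> B" "i \<notin> \<Union>K" by blast
    have i_outside: "i \<notin> P" if "P \<in> F" "\<not> B \<subseteq> P" for P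
      using i that unfolding K_def by blast
    let ?B0 = "B - {i}"
    have "card ?B0 < card B" using card_Diff1_less[OF finB i(1)] .
    then obtain X0 where X0: "jointly_optimal A G C a r d ?B0 X0"
      and X0_min: "\<forall>P\<in>F. delay_minimal A G C a r d (P \<inter> ?B0) X0"
      using less.hyps[of ?B0] less.prems by blast
    have "?B0 \<subset> A" "i \<in> A - ?B0" using i(1) less.prems by auto
    then obtain X where X: "jointly_optimal A G C a r d (insert i ?B0) X"
      and X_delays: "\<forall>i'\<in>?B0. delay G d {i'} X = delay G d {i'} X0"
      using ext X0 unfolding extensible_def by blast
    have B: "insert i ?B0 = B" using i(1) by blast
    have "delay_minimal A G C a r d (P \<inter> B) X" if "P \<in> F" for P
    proof (cases "B \<subseteq> P")
      case True
      then have "P \<inter> B = B" by blast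
      then show ?thesis using X unfolding B jointly_optimal_def delay_minimal_def by simp
    next
      case False
      then have P_B: "P \<inter> B = P \<inter> ?B0" using i_outside that by blast
      have "delay G d (P \<inter> ?B0) X = delay G d (P \<inter> ?B0) X0"
        using X_delays by (intro delay_eq_if_agent_delays_eq) blast
      then show ?thesis using X0_min that unfolding P_B delay_minimal_def by simp
    qed
    then show ?thesis using X unfolding B by blast
  qed
qed

lemma Greatest_eq_if_mutually_dominated:
  fixes f :: "'x \<Rightarrow> real"
  assumes "\<forall>X. P X \<longrightarrow> (\<exists>Y. Q Y \<and> f X \<le> f Y)" "\<forall>Y. Q Y \<longrightarrow> (\<exists>X. P X \<and> f Y \<le> f X)"
  shows "(GREATEST v. \<exists>X. P X \<and> v = f X) = (GREATEST v. \<exists>X. Q X \<and> v = f X)"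
proof -
  have transfer: "(\<exists>X. Q X \<and> v = f X) \<and> (\<forall>u. (\<exists>X. Q X \<and> u = f X) \<longrightarrow> u \<le> v)"
    if v: "(\<exists>X. P X \<and> v = f X) \<and> (\<forall>u. (\<exists>X. P X \<and> u = f X) \<longrightarrow> u \<le> v)"
      and PQ: "\<forall>X. P X \<longrightarrow> (\<exists>Y. Q Y \<and> f X \<le> f Y)"
      and QP: "\<forall>Y. Q Y \<longrightarrow> (\<exists>X. P X \<and> f Y \<le> f X)"
    for P Q and v :: real
  proof -
    obtain X where "P X" "v = f X" using v by blast
    then obtain Y where Y: "Q Y" "v \<le> f Y" using PQ by blast
    have bound: "u \<le> v" if u: "\<exists>X. Q X \<and> u = f X" for u
    proof -
      obtain Z where "Q Z" "u = f Z" using u by blast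
      then obtain X where "P X" "u \<le> f X" using QP by blast
      then show ?thesis using v by fastforce
    qed
    then have "v = f Y" using Y by fastforce
    then show ?thesis using Y(1) bound by blast
  qed
  have "(\<lambda>v. (\<exists>X. P X \<and> v = f X) \<and> (\<forall>u. (\<exists>X. P X \<and> u = f X) \<longrightarrow> u \<le> v))
      = (\<lambda>v. (\<exists>X. Q X \<and> v = f X) \<and> (\<forall>u. (\<exists>X. Q X \<and> u = f X) \<longrightarrow> u \<le> v))"
    using transfer[of P _ Q] transfer[of Q _ P] assms by (intro ext iffI) blast+
  then show ?thesis unfolding Greatest_def by (simp only:)
qed

context
  fixes A :: "'a set" and G :: "'g set" and C :: "'c set"
    and a :: "'a \<Rightarrow> 'g \<Rightarrow> 'c \<Rightarrow> real" and r :: "'a \<Rightarrow> 'c \<Rightarrow> real" and d :: "'a \<Rightarrow> 'g \<Rightarrow> real"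
    and lam lam' :: "'a \<Rightarrow> real" and x :: 'a
  assumes fin: "finite A" "finite G" and ext: "extensible A G C a r d"
    and lam_pos: "\<forall>i\<in>A. lam i > 0" and lam'_pos: "\<forall>i\<in>A. lam' i > 0"
    and refines: "\<forall>i\<in>A. \<forall>j\<in>A. lam i < lam j \<longrightarrow> lam' i < lam' j"
    and x: "x \<in> A"
    and level: "{i\<in>A. lam i = lam x} = {i\<in>A. lam' i = lam' x}"
begin

lemma upward_closed_refinement:
  assumes "upward_closed A lam P"
  shows "upward_closed A lam' P"
  unfolding upward_closed_def
proof (intro conjI ballI impI)
  show P: "P \<subseteq> A" using assms unfolding upward_closed_def by blast
  fix i j assume "i \<in> P" "j \<in> A" "lam' i \<le> lam' j"
  then have "lam i \<le> lam j" using refines P by (meson not_less subsetD)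
  then show "j \<in> P" using assms \<open>i \<in> P\<close> \<open>j \<in> A\<close> unfolding upward_closed_def by blast
qed

lemma refined_upper_sets_eq:
  "{i\<in>A. lam x \<le> lam i} = {i\<in>A. lam' x \<le> lam' i}"
  "{i\<in>A. lam x < lam i} = {i\<in>A. lam' x < lam' i}"
proof -
  have compare: "(lam x \<le> lam i \<longleftrightarrow> lam' x \<le> lam' i) \<and> (lam x < lam i \<longleftrightarrow> lam' x < lam' i)"
    if i: "i \<in> A" for i
  proof -
    have "lam i = lam x \<longleftrightarrow> lam' i = lam' x" using level i by blast
    moreover have "lam x < lam i \<Longrightarrow> lam' x < lam' i" "lam i < lam x \<Longrightarrow> lam' i < lam' x"
      using refines x i by blast+
    ultimately show ?thesis by linarith
  qed
  then show "{i\<in>A. lam x \<le> lam i} = {i\<in>A. lam' x \<le> lam' i}"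
    "{i\<in>A. lam x < lam i} = {i\<in>A. lam' x < lam' i}" by blast+
qed

lemma upper_set_upward_closed_both:
  "upward_closed A lam {i\<in>A. lam x \<le> lam i}" "upward_closed A lam' {i\<in>A. lam x \<le> lam i}"
  by (rule upward_closed_upper_set, subst refined_upper_sets_eq(1), rule upward_closed_upper_set)

text \<open>The chain consists of all upper sets of lam' together with the level's upper set
  with T removed; the latter fits into the chain because T lies in a single level.\<close>
lemma common_upper_optimum:
  assumes T: "T \<subseteq> {i\<in>A. lam i = lam x}"
  shows "\<exists>Z. upper_optimal A G C a r d lam Z \<and> upper_optimal A G C a r d lam' Z \<and>
    delay_minimal A G C a r d ({i\<in>A. lam x \<le> lam i} - T) Z"
proof -
  let ?U = "{i\<in>A. lam x \<le> lam i}"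
  define F where "F = insert (?U - T) {P. upward_closed A lam' P}"
  have "P \<subseteq> ?U - T \<or> ?U - T \<subseteq> P" if "upward_closed A lam' P" for P
  proof -
    have "P \<subseteq> {i\<in>A. lam x < lam i} \<or> {i\<in>A. lam x \<le> lam i} \<subseteq> P"
      using upward_closed_dichotomy[OF that x] unfolding refined_upper_sets_eq .
    moreover have "{i\<in>A. lam x < lam i} \<subseteq> ?U - T" using T by auto
    ultimately show ?thesis by blast
  qed
  then have "chain\<^sub>\<subseteq> F"
    using upward_closed_chain unfolding F_def chain_subset_def by blast
  then obtain Z where Z: "jointly_optimal A G C a r d A Z"
    and Z_min: "\<forall>P\<in>F. delay_minimal A G C a r d (P \<inter> A) Z"
    using extensible_chain_optimum[OF fin(1) ext] by blast
  have feasible: "lp_feasible A G C a r Z"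
    using Z unfolding jointly_optimal_def lp_feasible_def by blast
  have "delay_minimal A G C a r d P Z" if "upward_closed A lam' P" for P
  proof -
    have "P \<in> F" "P \<inter> A = P" using that unfolding F_def upward_closed_def by auto
    then show ?thesis using Z_min by metis
  qed
  then have "upper_optimal A G C a r d lam' Z" "upper_optimal A G C a r d lam Z"
    using feasible upward_closed_refinement unfolding upper_optimal_def by blast+
  moreover have "(?U - T) \<inter> A = ?U - T" by blast
  then have "delay_minimal A G C a r d (?U - T) Z" using Z_min unfolding F_def by simp
  ultimately show ?thesis by blast
qed

lemma lp_optimal_imp_upper_optimal_both:
  "lp_optimal A G C a r d lam X \<Longrightarrow> upper_optimal A G C a r d lam X"
  "lp_optimal A G C a r d lam' X \<Longrightarrow> upper_optimal A G C a r d lam' X"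
proof -
  obtain Z where "upper_optimal A G C a r d lam Z" "upper_optimal A G C a r d lam' Z"
    using common_upper_optimum[of "{}"] by blast
  then show "lp_optimal A G C a r d lam X \<Longrightarrow> upper_optimal A G C a r d lam X"
    "lp_optimal A G C a r d lam' X \<Longrightarrow> upper_optimal A G C a r d lam' X"
    using lp_optimal_imp_upper_optimal[OF fin(1) lam_pos]
      lp_optimal_imp_upper_optimal[OF fin(1) lam'_pos] by blast+
qed

lemma level_delay_eq:
  assumes X: "lp_optimal A G C a r d lam X" and X': "lp_optimal A G C a r d lam' X'"
  shows "delay G d {i\<in>A. lam i = lam x} X = delay G d {i\<in>A. lam i = lam x} X'"
proof -
  let ?U = "{i\<in>A. lam x \<le> lam i}" and ?V = "{i\<in>A. lam x < lam i}"
  have feasible: "lp_feasible A G C a r X" "lp_feasible A G C a r X'"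
    using X X' unfolding lp_optimal_def by blast+
  have "upward_closed A lam ?V" "upward_closed A lam' ?V"
    by (rule upward_closed_upper_set, subst refined_upper_sets_eq(2), rule upward_closed_upper_set)
  then have "delay_minimal A G C a r d P X \<and> delay_minimal A G C a r d P X'"
    if "P \<in> {?U, ?V}" for P
    using that upper_set_upward_closed_both lp_optimal_imp_upper_optimal_both(1)[OF X]
      lp_optimal_imp_upper_optimal_both(2)[OF X'] unfolding upper_optimal_def by blast
  then have "delay G d P X = delay G d P X'" if "P \<in> {?U, ?V}" for P
    using delay_minimal_delay_eq[OF _ _ feasible] that by blast
  then have "delay G d ?U X = delay G d ?U X'" "delay G d ?V X = delay G d ?V X'" by blast+
  moreover have split: "delay G d ?U Y = delay G d ?V Y + delay G d {i\<in>A. lam i = lam x} Y"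
    for Y :: "'a \<Rightarrow> 'g \<Rightarrow> real"
  proof -
    have "finite ?U" "?V \<subseteq> ?U" using fin(1) by auto
    moreover have "?U - ?V = {i\<in>A. lam i = lam x}" by auto
    ultimately show ?thesis using delay_Diff[of ?U ?V G d Y] by simp
  qed
  ultimately show ?thesis using split[of X] split[of X'] by linarith
qed

text \<open>Swapping the common optimum onto T: it agrees with X on the level's upper set but
  has minimal delay on the rest of it, hence at least X's delay on T.\<close>
lemma level_subset_delay_dominated:
  assumes T: "T \<subseteq> {i\<in>A. lam i = lam x}" and X: "lp_feasible A G C a r X"
    and X_min: "delay_minimal A G C a r d {i\<in>A. lam x \<le> lam i} X"
  shows "\<exists>Z. lp_optimal A G C a r d lam Z \<and> lp_optimal A G C a r d lam' Z \<and>
    delay G d T X \<le> delay G d T Z"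
proof -
  let ?U = "{i\<in>A. lam x \<le> lam i}"
  obtain Z where Z: "upper_optimal A G C a r d lam Z" "upper_optimal A G C a r d lam' Z"
    and Z_min: "delay_minimal A G C a r d (?U - T) Z"
    using common_upper_optimum[OF T] by blast
  have "delay G d ?U X = delay G d ?U Z"
    using delay_minimal_delay_eq[OF X_min _ X] Z(1) upper_set_upward_closed_both(1)
    unfolding upper_optimal_def by blast
  moreover have "delay G d (?U - T) Z \<le> delay G d (?U - T) X"
    using Z_min X unfolding delay_minimal_def lp_feasible_def by blast
  moreover have "T \<subseteq> ?U" using T by auto
  ultimately have "delay G d T X \<le> delay G d T Z"
    using delay_Diff[of ?U T G d X] delay_Diff[of ?U T G d Z] fin(1) by simp
  then show ?thesis
    using Z upper_optimal_imp_lp_optimal[OF fin(1)] lam_pos lam'_pos by blast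
qed

lemma level_subset_max_delay_eq:
  assumes T: "T \<subseteq> {i\<in>A. lam i = lam x}"
  shows "(GREATEST v. \<exists>X. lp_optimal A G C a r d lam X \<and> v = delay G d T X)
       = (GREATEST v. \<exists>X. lp_optimal A G C a r d lam' X \<and> v = delay G d T X)"
proof (rule Greatest_eq_if_mutually_dominated)
  have "lp_feasible A G C a r X \<and> delay_minimal A G C a r d {i\<in>A. lam x \<le> lam i} X"
    if "lp_optimal A G C a r d lam X \<or> lp_optimal A G C a r d lam' X" for X
    using that lp_optimal_imp_upper_optimal_both upper_set_upward_closed_both
    unfolding upper_optimal_def by blast
  then show "\<forall>X. lp_optimal A G C a r d lam X \<longrightarrow>
      (\<exists>Y. lp_optimal A G C a r d lam' Y \<and> delay G d T X \<le> delay G d T Y)"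
    "\<forall>X. lp_optimal A G C a r d lam' X \<longrightarrow>
      (\<exists>Y. lp_optimal A G C a r d lam Y \<and> delay G d T X \<le> delay G d T Y)"
    using level_subset_delay_dominated[OF T] by blast+
qed

end

lemma ordered_level_partition_less_iff:
  assumes "ordered_level_partition w A Ps" "n < length Ps" "m < length Ps"
    "i \<in> Ps ! n" "j \<in> Ps ! m"
  shows "w i < w j \<longleftrightarrow> n < m"
proof -
  have less: "\<forall>n m. n < m \<and> m < length Ps \<longrightarrow> (\<forall>x\<in>Ps ! n. \<forall>y\<in>Ps ! m. w x < w y)"
    and eq: "\<forall>n<length Ps. \<forall>x\<in>Ps ! n. \<forall>y\<in>Ps ! n. w x = w y"
    using assms(1) unfolding ordered_level_partition_def by blast+
  have "n < m \<Longrightarrow> w i < w j" using less assms(3-5) by blast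
  moreover have "m < n \<Longrightarrow> w j < w i" using less assms(2,4,5) by blast
  moreover have "n = m \<Longrightarrow> w i = w j" using eq assms(2,4,5) by blast
  ultimately show ?thesis by (cases n m rule: linorder_cases) auto
qed

lemma ordered_level_partition_cover:
  assumes "ordered_level_partition w A Ps" "i \<in> A"
  obtains n where "n < length Ps" "i \<in> Ps ! n"
proof -
  have "\<Union>(set Ps) = A" using assms(1) unfolding ordered_level_partition_def by (elim conjE)
  then obtain P where "P \<in> set Ps" "i \<in> P" using assms(2) by blast
  then show ?thesis using that by (metis in_set_conv_nth)
qed

lemma ordered_level_partition_block_eq:
  assumes part: "ordered_level_partition w A Ps" and n: "n < length Ps" and x: "x \<in> Ps ! n"
  shows "Ps ! n = {i\<in>A. w i = w x}"
proof
  have "\<Union>(set Ps) = A" "\<forall>n<length Ps. \<forall>x\<in>Ps ! n. \<forall>y\<in>Ps ! n. w x = w y"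
    using part unfolding ordered_level_partition_def by blast+
  then show "Ps ! n \<subseteq> {i\<in>A. w i = w x}" using nth_mem[OF n] n x by blast
  show "{i\<in>A. w i = w x} \<subseteq> Ps ! n"
  proof
    fix i assume i: "i \<in> {i\<in>A. w i = w x}"
    then obtain m where m: "m < length Ps" "i \<in> Ps ! m"
      using ordered_level_partition_cover[OF part] by blast
    then have "m = n"
      using ordered_level_partition_less_iff[OF part m(1) n m(2) x]
        ordered_level_partition_less_iff[OF part n m(1) x m(2)] i by auto
    then show "i \<in> Ps ! n" using m by simp
  qed
qed

lemma ordered_level_partition_refinement:
  assumes part: "ordered_level_partition w A Ps" and part': "ordered_level_partition w' A Ps'"
    and sigma: "mono \<sigma>" "\<forall>m<length Ps'. \<sigma> m < length Ps \<and> Ps' ! m \<subseteq> Ps ! \<sigma> m"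
    and "i \<in> A" "j \<in> A" "w i < w j"
  shows "w' i < w' j"
proof -
  obtain m where m: "m < length Ps'" "i \<in> Ps' ! m"
    using ordered_level_partition_cover[OF part' \<open>i \<in> A\<close>] .
  obtain n where n: "n < length Ps'" "j \<in> Ps' ! n"
    using ordered_level_partition_cover[OF part' \<open>j \<in> A\<close>] .
  have "\<sigma> m < length Ps" "\<sigma> n < length Ps" "i \<in> Ps ! \<sigma> m" "j \<in> Ps ! \<sigma> n"
    using sigma(2) m n by auto
  then have "\<sigma> m < \<sigma> n" using ordered_level_partition_less_iff[OF part] \<open>w i < w j\<close> by blast
  have "m < n"
  proof (rule ccontr)
    assume "\<not> m < n"
    then have "\<sigma> n \<le> \<sigma> m" using sigma(1) by (simp add: monoD)
    then show False using \<open>\<sigma> m < \<sigma> n\<close> by simp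
  qed
  then show ?thesis using ordered_level_partition_less_iff[OF part' m(1) n(1) m(2) n(2)] by simp
qed

lemma ordered_level_partition_common_block:
  assumes part: "ordered_level_partition w A Ps" and part': "ordered_level_partition w' A Ps'"
    and n: "n < length Ps" "n < length Ps'" and block: "Ps ! n = Ps' ! n"
  shows "\<exists>x\<in>A. Ps ! n = {i\<in>A. w i = w x} \<and> {i\<in>A. w i = w x} = {i\<in>A. w' i = w' x}"
proof -
  have "Ps ! n \<noteq> {}" using part n(1) unfolding ordered_level_partition_def by blast
  then obtain x where x: "x \<in> Ps ! n" by blast
  have "Ps ! n = {i\<in>A. w i = w x}" using ordered_level_partition_block_eq[OF part n(1) x] .
  moreover have "Ps ! n = {i\<in>A. w' i = w' x}"
    using ordered_level_partition_block_eq[OF part' n(2)] x block by simp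
  ultimately show ?thesis using x by blast
qed

lemma ordered_level_partition_split_last_block:
  assumes part: "ordered_level_partition lam A (map S [1..<k] @ [A'])"
    and part': "ordered_level_partition lam' A (map S [1..<k+1] @ [A' - S k])"
    and "S k \<subseteq> A'" "k \<ge> 1"
  shows "\<forall>i\<in>A. \<forall>j\<in>A. lam i < lam j \<longrightarrow> lam' i < lam' j"
proof -
  let ?Ps = "map S [1..<k] @ [A']" and ?Ps' = "map S [1..<k+1] @ [A' - S k]"
  have sigma: "\<forall>m<length ?Ps'. min m (k - 1) < length ?Ps \<and> ?Ps' ! m \<subseteq> ?Ps ! min m (k - 1)"
  proof (intro allI impI)
    fix m assume "m < length ?Ps'"
    then have "m < k - 1 \<or> m = k - 1 \<or> m = k" using \<open>k \<ge> 1\<close> by auto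
    then show "min m (k - 1) < length ?Ps \<and> ?Ps' ! m \<subseteq> ?Ps ! min m (k - 1)"
      using assms(3,4) by (auto simp: nth_append)
  qed
  have "mono (\<lambda>m::nat. min m (k - 1))" by (auto intro: monoI simp: min_def)
  from ordered_level_partition_refinement[OF part part' this sigma] show ?thesis by blast
qed

theorem lemmaF5:
  fixes A :: "'a set" and G :: "'g set" and C :: "'c set"
    and a :: "'a \<Rightarrow> 'g \<Rightarrow> 'c \<Rightarrow> real" and r :: "'a \<Rightarrow> 'c \<Rightarrow> real" and d :: "'a \<Rightarrow> 'g \<Rightarrow> real"
    and lam lam' :: "'a \<Rightarrow> real" and S :: "nat \<Rightarrow> 'a set" and A' :: "'a set" and k :: nat
  assumes fin: "finite A" "finite G" "finite C"
    and r_nonneg: "\<forall>i\<in>A. \<forall>c\<in>C. r i c \<ge> 0"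
    and d_nonneg: "\<forall>i\<in>A. \<forall>j\<in>G. d i j \<ge> 0"
    and lp_feas: "\<exists>X. lp_feasible A G C a r X"
    and ext: "extensible A G C a r d"
    and lam_pos: "\<forall>i\<in>A. lam i > 0"
    and k_pos: "k \<ge> 1"
    and part: "ordered_level_partition lam A (map S [1..<k] @ [A'])"
    and Sk: "S k \<subset> A'"
    and lam'_ge: "\<forall>i\<in>A. lam' i \<ge> lam i"
    and lam'_pos: "\<forall>i\<in>A. lam' i > 0"
    and part': "ordered_level_partition lam' A (map S [1..<k+1] @ [A' - S k])"
  shows "\<forall>g. 1 \<le> g \<and> g < k \<longrightarrow>
           (\<forall>X X'. lp_optimal A G C a r d lam X \<longrightarrow> lp_optimal A G C a r d lam' X' \<longrightarrow>
                    delay G d (S g) X = delay G d (S g) X') \<and>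
           (\<forall>T. T \<subseteq> S g \<longrightarrow>
              (GREATEST v. \<exists>X. lp_optimal A G C a r d lam X \<and> v = delay G d T X)
            = (GREATEST v. \<exists>X. lp_optimal A G C a r d lam' X \<and> v = delay G d T X))"
proof -
  have refines: "\<forall>i\<in>A. \<forall>j\<in>A. lam i < lam j \<longrightarrow> lam' i < lam' j"
    using ordered_level_partition_split_last_block[OF part part'] Sk k_pos by blast
  have level_set: "\<exists>x\<in>A. S g = {i\<in>A. lam i = lam x} \<and>
      {i\<in>A. lam i = lam x} = {i\<in>A. lam' i = lam' x}" if g: "1 \<le> g \<and> g < k" for g
  proof -
    have block: "g - 1 < length (map S [1..<k] @ [A'])"
      "g - 1 < length (map S [1..<k+1] @ [A' - S k])"
      "(map S [1..<k] @ [A']) ! (g - 1) = S g" "(map S [1..<k+1] @ [A' - S k]) ! (g - 1) = S g"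
      using g by (auto simp: nth_append)
    from ordered_level_partition_common_block[OF part part' block(1,2)] block(3,4)
    show ?thesis by simp
  qed
  note level_lemmas = level_delay_eq[OF fin(1,2) ext lam_pos lam'_pos refines]
    level_subset_max_delay_eq[OF fin(1,2) ext lam_pos lam'_pos refines]
  show ?thesis
  proof (intro allI impI conjI)
    fix g X X' assume g: "1 \<le> g \<and> g < k"
      and X: "lp_optimal A G C a r d lam X" "lp_optimal A G C a r d lam' X'"
    obtain x where "x \<in> A" "S g = {i\<in>A. lam i = lam x}"
      "{i\<in>A. lam i = lam x} = {i\<in>A. lam' i = lam' x}" using level_set[OF g] by blast
    then show "delay G d (S g) X = delay G d (S g) X'" using level_lemmas(1) X by simp
  next
    fix g T assume g: "1 \<le> g \<and> g < k" and T: "T \<subseteq> S g"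
    obtain x where "x \<in> A" "S g = {i\<in>A. lam i = lam x}"
      "{i\<in>A. lam i = lam x} = {i\<in>A. lam' i = lam' x}" using level_set[OF g] by blast
    then show "(GREATEST v. \<exists>X. lp_optimal A G C a r d lam X \<and> v = delay G d T X)
      = (GREATEST v. \<exists>X. lp_optimal A G C a r d lam' X \<and> v = delay G d T X)"
      using level_lemmas(2) T by simp
  qed
qed

end
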